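(* Let $n\ge 7$ and let $r_1,\ldots,r_n$ be any positive reals. Then there exists a homothetic packing of $n$ cubes with radii $r_1,\ldots,r_n$ and more than $3n-3$ contacts.
   Context: Let $C=\{(x,y,z):-1\le x,y,z\le 1\}\subset\mathbb{R}^3$. A homothetic cube packing with radii $r_1,\ldots,r_n$ is a set $\{C_1,\ldots,C_n\}$ with $C_i=r_iC+p_i$, $p_i\in\mathbb{R}^3$, whose interiors are pairwise disjoint. A contact is an unordered pair $\{i,j\}$, $i\ne j$, with $C_i\cap C_j\ne\emptyset$. *)

theory Defs
  imports "HOL-Analysis.Analysis"
begin

definition unit_cube :: "(real^3) set" where
  "unit_cube = {x. \<forall>i. -1 \<le> x $ i \<and> x $ i \<le> 1}"

definition hcube :: "real \<Rightarrow> real^3 \<Rightarrow> (real^3) set" where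
  "hcube r p = (\<lambda>x. p + r *\<^sub>R x) ` unit_cube"

definition homothetic_cube_packing :: "nat \<Rightarrow> (nat \<Rightarrow> real) \<Rightarrow> (nat \<Rightarrow> real^3) \<Rightarrow> bool" where
  "homothetic_cube_packing n r p \<longleftrightarrow>
     (\<forall>i<n. \<forall>j<n. i \<noteq> j \<longrightarrow> interior (hcube (r i) (p i)) \<inter> interior (hcube (r j) (p j)) = {})"

definition contacts :: "nat \<Rightarrow> (nat \<Rightarrow> real) \<Rightarrow> (nat \<Rightarrow> real^3) \<Rightarrow> nat set set" where
  "contacts n r p = {{i, j} | i j. i < n \<and> j < n \<and> i \<noteq> j \<and>
      hcube (r i) (p i) \<inter> hcube (r j) (p j) \<noteq> {}}"

end

theory Submission
  imports Defs
begin

(* Sort the radii increasingly and stack the cubes in four towers, one in each quadrant around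
   the z-axis, each cube having an edge on that axis and cube k resting on cube k - 4.  Two cubes
   whose height ranges overlap meet on the axis.  The cubes 0, ..., 7 all contain the origin,
   and since the radii increase, cube l overlaps in height with its three predecessors
   l - 1, l - 2, l - 3 in the other towers; for n >= 7 this gives at least 3n contacts. *)

lemma unit_cube_eq_cbox: "unit_cube = cbox (- 1) 1"
  by (auto simp: unit_cube_def mem_box_cart)

lemma hcube_eq_cbox:
  assumes "0 \<le> r"
  shows "hcube r p = cbox (p - r *\<^sub>R 1) (p + r *\<^sub>R 1)"
proof -
  have "hcube r p = (\<lambda>x. r *\<^sub>R x + p) ` cbox (- 1) 1"
    unfolding hcube_def unit_cube_eq_cbox by (metis add.commute)
  also have "\<dots> = cbox (p - r *\<^sub>R 1) (p + r *\<^sub>R 1)"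
  proof -
    have "0 \<in> cbox (- 1) (1 :: real^3)" by (simp add: mem_box_cart)
    then show ?thesis
      unfolding image_affinity_cbox using assms by (auto simp: algebra_simps)
  qed
  finally show ?thesis .
qed

lemma mem_hcube_iff:
  assumes "0 \<le> r"
  shows "x \<in> hcube r p \<longleftrightarrow> (\<forall>i. \<bar>x $ i - p $ i\<bar> \<le> r)"
  by (auto simp: hcube_eq_cbox[OF assms] mem_box_cart abs_le_iff algebra_simps)

lemma interior_hcube_disjoint:
  assumes "0 \<le> r" "0 \<le> s" "p $ i + r \<le> q $ i - s"
  shows "interior (hcube r p) \<inter> interior (hcube s q) = {}"
proof -
  have "x $ i < p $ i + r" "q $ i - s < x $ i"
    if "x \<in> interior (hcube r p)" "x \<in> interior (hcube s q)" for x
    using that by (auto simp: hcube_eq_cbox assms(1,2) mem_box_cart)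
  then show ?thesis using assms(3) by fastforce
qed

lemma homothetic_cube_packing_permute_imp:
  assumes "\<sigma> permutes {..<n}" "homothetic_cube_packing n r p"
  shows "homothetic_cube_packing n (r \<circ> \<sigma>) (p \<circ> \<sigma>)"
  using assms permutes_in_image[OF assms(1)] permutes_inj[OF assms(1)]
  unfolding homothetic_cube_packing_def by (simp add: inj_eq)

lemma homothetic_cube_packing_permute:
  assumes "\<sigma> permutes {..<n}"
  shows "homothetic_cube_packing n (r \<circ> \<sigma>) (p \<circ> \<sigma>) \<longleftrightarrow> homothetic_cube_packing n r p"
proof
  assume "homothetic_cube_packing n (r \<circ> \<sigma>) (p \<circ> \<sigma>)"
  then have "homothetic_cube_packing n (r \<circ> \<sigma> \<circ> inv \<sigma>) (p \<circ> \<sigma> \<circ> inv \<sigma>)"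
    using permutes_inv[OF assms] by (rule homothetic_cube_packing_permute_imp[rotated])
  then show "homothetic_cube_packing n r p"
    by (simp add: o_assoc[symmetric] permutes_inv_o[OF assms])
qed (rule homothetic_cube_packing_permute_imp[OF assms])

lemma finite_contacts: "finite (contacts n r p)"
  by (rule finite_subset[of _ "Pow {..<n}"]) (auto simp: contacts_def)

lemma card_contacts_permute_le:
  assumes "\<sigma> permutes {..<n}"
  shows "card (contacts n (r \<circ> \<sigma>) (p \<circ> \<sigma>)) \<le> card (contacts n r p)"
proof (rule card_inj_on_le)
  show "inj_on (image \<sigma>) (contacts n (r \<circ> \<sigma>) (p \<circ> \<sigma>))"
    using permutes_inj[OF assms] by (simp add: inj_on_def inj_image_eq_iff)
  show "image \<sigma> ` contacts n (r \<circ> \<sigma>) (p \<circ> \<sigma>) \<subseteq> contacts n r p"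
  proof
    fix S assume "S \<in> image \<sigma> ` contacts n (r \<circ> \<sigma>) (p \<circ> \<sigma>)"
    then obtain i j where "S = {\<sigma> i, \<sigma> j}" "i < n" "j < n" "i \<noteq> j"
        "hcube (r (\<sigma> i)) (p (\<sigma> i)) \<inter> hcube (r (\<sigma> j)) (p (\<sigma> j)) \<noteq> {}"
      by (auto simp: contacts_def)
    moreover have "\<sigma> i < n" "\<sigma> j < n" "\<sigma> i \<noteq> \<sigma> j"
      using calculation permutes_in_image[OF assms] permutes_inj[OF assms] by (auto simp: inj_eq)
    ultimately show "S \<in> contacts n r p"
      unfolding contacts_def by blast
  qed
qed (rule finite_contacts)

lemma card_contacts_permute:
  assumes "\<sigma> permutes {..<n}"
  shows "card (contacts n (r \<circ> \<sigma>) (p \<circ> \<sigma>)) = card (contacts n r p)"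
proof (rule antisym)
  have "card (contacts n (r \<circ> \<sigma> \<circ> inv \<sigma>) (p \<circ> \<sigma> \<circ> inv \<sigma>))
      \<le> card (contacts n (r \<circ> \<sigma>) (p \<circ> \<sigma>))"
    by (rule card_contacts_permute_le[OF permutes_inv[OF assms]])
  then show "card (contacts n r p) \<le> card (contacts n (r \<circ> \<sigma>) (p \<circ> \<sigma>))"
    by (simp add: o_assoc[symmetric] permutes_inv_o[OF assms])
qed (rule card_contacts_permute_le[OF assms])

lemma sorting_permutation:
  fixes r :: "nat \<Rightarrow> 'a::linorder"
  obtains \<sigma> where "\<sigma> permutes {..<n}" "mono_on {..<n} (r \<circ> \<sigma>)"
proof -
  define xs where "xs = sort_key r [0..<n]"
  obtain \<sigma> where \<sigma>: "\<sigma> permutes {..<n}" "permute_list \<sigma> [0..<n] = xs"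
    using mset_eq_permutation[of xs "[0..<n]"] by (auto simp: xs_def)
  have "xs ! i = \<sigma> i" if "i < n" for i
    using permute_list_nth[of \<sigma> "[0..<n]" i] \<sigma> that permutes_in_image[OF \<sigma>(1)] by auto
  moreover have "sorted (map r xs)" "length xs = n"
    by (simp_all add: xs_def)
  ultimately have "mono_on {..<n} (r \<circ> \<sigma>)"
    by (auto intro!: mono_onI simp: sorted_iff_nth_mono)
  with \<sigma>(1) show ?thesis using that by blast
qed

fun tower_top :: "(nat \<Rightarrow> real) \<Rightarrow> nat \<Rightarrow> real" where
  "tower_top \<rho> k = (if k < 4 then 0 else tower_top \<rho> (k - 4) + 2 * \<rho> k)"

declare tower_top.simps [simp del]

lemma tower_top_less_4: "k < 4 \<Longrightarrow> tower_top \<rho> k = 0"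
  by (simp add: tower_top.simps)

lemma tower_top_step: "4 \<le> k \<Longrightarrow> tower_top \<rho> k = tower_top \<rho> (k - 4) + 2 * \<rho> k"
  by (simp add: tower_top.simps)

lemma tower_top_le_Suc:
  assumes nonneg: "\<And>k. k < n \<Longrightarrow> 0 \<le> \<rho> k" and mono: "mono_on {..<n} \<rho>"
    and "Suc k < n"
  shows "tower_top \<rho> k \<le> tower_top \<rho> (Suc k)"
  using assms(3)
proof (induction k rule: less_induct)
  case (less k)
  consider "k < 3" | "k = 3" | "4 \<le> k" by linarith
  then show ?case
  proof cases
    case 1
    then show ?thesis by (simp add: tower_top_less_4)
  next
    case 2
    then show ?thesis using nonneg[of 4] less.prems by (simp add: tower_top_less_4 tower_top_step)
  next
    case 3
    then have "tower_top \<rho> (k - 4) \<le> tower_top \<rho> (Suc (k - 4))"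
      using less by simp
    moreover have "\<rho> k \<le> \<rho> (Suc k)"
      using mono less.prems by (simp add: mono_on_def)
    moreover have "tower_top \<rho> (Suc k) = tower_top \<rho> (Suc (k - 4)) + 2 * \<rho> (Suc k)"
      using 3 tower_top_step[of "Suc k" \<rho>] Suc_diff_le[OF 3] by (metis le_SucI)
    ultimately show ?thesis
      using 3 tower_top_step[of k \<rho>] by linarith
  qed
qed

lemma tower_top_mono:
  assumes "\<And>k. k < n \<Longrightarrow> 0 \<le> \<rho> k" "mono_on {..<n} \<rho>" "k \<le> l" "l < n"
  shows "tower_top \<rho> k \<le> tower_top \<rho> l"
  using assms(3,4)
proof (induction l)
  case (Suc l)
  then show ?case
    using tower_top_le_Suc[OF assms(1,2), of l] by (cases "k = Suc l") auto
qed simp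

definition quadrant_sign_x :: "nat \<Rightarrow> real" where
  "quadrant_sign_x k = (if k mod 4 \<in> {0, 3} then 1 else -1)"

definition quadrant_sign_y :: "nat \<Rightarrow> real" where
  "quadrant_sign_y k = (if k mod 4 \<in> {0, 1} then 1 else -1)"

lemma quadrant_signs_differ:
  "k mod 4 \<noteq> l mod 4 \<Longrightarrow> quadrant_sign_x k \<noteq> quadrant_sign_x l \<or> quadrant_sign_y k \<noteq> quadrant_sign_y l"
  unfolding quadrant_sign_x_def quadrant_sign_y_def by auto

text \<open>Cube k lies in the quadrant k mod 4 around the z-axis, with one edge on the axis, directly
  on top of cube k - 4; the cubes 0, 1, 2, 3 hang below the plane z = 0.\<close>
definition tower_center :: "(nat \<Rightarrow> real) \<Rightarrow> nat \<Rightarrow> real^3" where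
  "tower_center \<rho> k =
     vector [quadrant_sign_x k * \<rho> k, quadrant_sign_y k * \<rho> k, tower_top \<rho> k - \<rho> k]"

lemma axis_point_mem_tower_cube:
  assumes "0 \<le> \<rho> k" "tower_top \<rho> k - 2 * \<rho> k \<le> z" "z \<le> tower_top \<rho> k"
  shows "vector [0, 0, z] \<in> hcube (\<rho> k) (tower_center \<rho> k)"
  using assms
  by (simp add: mem_hcube_iff tower_center_def forall_3 vector_3 abs_le_iff
      quadrant_sign_x_def quadrant_sign_y_def)

lemma tower_top_le_bottom:
  assumes "\<And>k. k < n \<Longrightarrow> 0 \<le> \<rho> k" "mono_on {..<n} \<rho>"
    and "k < l" "l < n" "k mod 4 = l mod 4"
  shows "tower_top \<rho> k \<le> tower_top \<rho> l - 2 * \<rho> l"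
proof -
  have "4 dvd l - k"
    using mod_eq_dvd_iff_nat[of k l 4, OF less_imp_le[OF assms(3)]] assms(5) by simp
  then have "4 \<le> l - k"
    using assms(3) by (simp add: dvd_imp_le)
  then have "k \<le> l - 4" "4 \<le> l" by arith+
  then show ?thesis
    using tower_top_mono[OF assms(1,2), of k "l - 4"] tower_top_step[of l \<rho>] assms(4) by simp
qed

lemma tower_packing:
  assumes nonneg: "\<And>k. k < n \<Longrightarrow> 0 \<le> \<rho> k" and mono: "mono_on {..<n} \<rho>"
  shows "homothetic_cube_packing n \<rho> (tower_center \<rho>)"
  unfolding homothetic_cube_packing_def
proof (intro allI impI)
  fix i j assume ij: "i < n" "j < n" "i \<noteq> j"
  let ?c = "tower_center \<rho>"
  have "\<exists>m. ?c i $ m + \<rho> i \<le> ?c j $ m - \<rho> j \<or> ?c j $ m + \<rho> j \<le> ?c i $ m - \<rho> i"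
  proof (cases "i mod 4 = j mod 4")
    case True
    then have "?c i $ 3 + \<rho> i \<le> ?c j $ 3 - \<rho> j \<or> ?c j $ 3 + \<rho> j \<le> ?c i $ 3 - \<rho> i"
      using ij tower_top_le_bottom[OF nonneg mono, of i j]
        tower_top_le_bottom[OF nonneg mono, of j i]
      by (cases "i < j") (auto simp: tower_center_def)
    then show ?thesis by blast
  next
    case False
    then have "?c i $ 1 + \<rho> i \<le> ?c j $ 1 - \<rho> j \<or> ?c j $ 1 + \<rho> j \<le> ?c i $ 1 - \<rho> i \<or>
        ?c i $ 2 + \<rho> i \<le> ?c j $ 2 - \<rho> j \<or> ?c j $ 2 + \<rho> j \<le> ?c i $ 2 - \<rho> i"
      using quadrant_signs_differ[OF False] nonneg[OF ij(1)] nonneg[OF ij(2)]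
      by (auto simp: tower_center_def quadrant_sign_x_def quadrant_sign_y_def split: if_splits)
    then show ?thesis by blast
  qed
  then show "interior (hcube (\<rho> i) (?c i)) \<inter> interior (hcube (\<rho> j) (?c j)) = {}"
    using interior_hcube_disjoint nonneg ij by (metis inf_commute)
qed

lemma tower_cubes_touch:
  assumes nonneg: "\<And>k. k < n \<Longrightarrow> 0 \<le> \<rho> k" and mono: "mono_on {..<n} \<rho>"
    and kl: "k < l" "l < n" "l < 8 \<or> l < k + 4"
  shows "hcube (\<rho> k) (tower_center \<rho> k) \<inter> hcube (\<rho> l) (tower_center \<rho> l) \<noteq> {}"
proof -
  have "\<exists>z. \<forall>m\<in>{k, l}. tower_top \<rho> m - 2 * \<rho> m \<le> z \<and> z \<le> tower_top \<rho> m"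
  proof (cases "l < 8")
    case True
    have "tower_top \<rho> m - 2 * \<rho> m \<le> 0 \<and> 0 \<le> tower_top \<rho> m" if "m < 8" "m < n" for m
      using that nonneg[of m] tower_top_step[of m \<rho>] tower_top_less_4[of m \<rho>]
        tower_top_less_4[of "m - 4" \<rho>]
      by (cases "m < 4") auto
    then show ?thesis using True kl by (intro exI[of _ 0]) auto
  next
    case False
    then have "tower_top \<rho> (k - 4) \<le> tower_top \<rho> (l - 4) \<and> tower_top \<rho> (l - 4) \<le> tower_top \<rho> k"
      using kl tower_top_mono[OF nonneg mono] by simp
    then show ?thesis
      using False kl nonneg[of l] tower_top_step[of k \<rho>] tower_top_step[of l \<rho>]
      by (intro exI[of _ "tower_top \<rho> (l - 4)"]) auto
  qed
  then obtain z where "\<forall>m\<in>{k, l}. tower_top \<rho> m - 2 * \<rho> m \<le> z \<and> z \<le> tower_top \<rho> m"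
    by blast
  then have "vector [0, 0, z] \<in> hcube (\<rho> k) (tower_center \<rho> k) \<inter> hcube (\<rho> l) (tower_center \<rho> l)"
    using axis_point_mem_tower_cube nonneg kl by simp
  then show ?thesis by blast
qed

definition tower_pairs :: "nat \<Rightarrow> nat set set" where
  "tower_pairs n = {{k, l} | k l. k < l \<and> l < n \<and> (l < 8 \<or> l < k + 4)}"

lemma tower_pairs_subset_contacts:
  assumes "\<And>k. k < n \<Longrightarrow> 0 \<le> \<rho> k" "mono_on {..<n} \<rho>"
  shows "tower_pairs n \<subseteq> contacts n \<rho> (tower_center \<rho>)"
  using tower_cubes_touch[OF assms] unfolding tower_pairs_def contacts_def by fastforce

lemma card_tower_pairs:
  assumes "7 \<le> n"
  shows "3 * n \<le> card (tower_pairs n)"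
proof -
  define D :: "(nat \<times> nat) set" where
    "D = {3..<n} \<times> {1, 2, 3} \<union> {(1,1), (2,1), (2,2), (4,4), (5,4), (5,5), (6,4), (6,5), (6,6)}"
  define g where "g = (\<lambda>(l, d). {l - d, l :: nat})"
  have D_bounds: "1 \<le> d \<and> d \<le> l \<and> l < n \<and> (l < 8 \<or> d \<le> 3)" if "(l, d) \<in> D" for l d
    using that assms unfolding D_def by auto
  have "card D = 3 * n"
    using assms unfolding D_def by (subst card_Un_disjoint) (auto simp: card_cartesian_product)
  moreover have "inj_on g D"
  proof (rule inj_onI)
    fix x y assume xy: "x \<in> D" "y \<in> D" "g x = g y"
    obtain l d l' d' where ld: "x = (l, d)" "y = (l', d')" by fastforce
    have "1 \<le> d" "d \<le> l" "1 \<le> d'" "d' \<le> l'"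
      using D_bounds xy(1,2) unfolding ld by auto
    moreover have "(l - d = l' - d' \<and> l = l') \<or> (l - d = l' \<and> l = l' - d')"
      using xy(3) unfolding ld g_def by (simp add: doubleton_eq_iff)
    ultimately show "x = y"
      unfolding ld by auto
  qed
  moreover have "g ` D \<subseteq> tower_pairs n"
    using D_bounds unfolding g_def tower_pairs_def by fastforce
  moreover have "finite (tower_pairs n)"
    by (rule finite_subset[of _ "Pow {..<n}"]) (auto simp: tower_pairs_def)
  ultimately show ?thesis
    by (metis card_image card_mono)
qed

lemma card_contacts_tower_ge:
  assumes "7 \<le> n" "\<And>k. k < n \<Longrightarrow> 0 \<le> \<rho> k" "mono_on {..<n} \<rho>"
  shows "3 * n \<le> card (contacts n \<rho> (tower_center \<rho>))"
proof -
  have "3 * n \<le> card (tower_pairs n)"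
    by (rule card_tower_pairs[OF assms(1)])
  also have "\<dots> \<le> card (contacts n \<rho> (tower_center \<rho>))"
    by (rule card_mono[OF finite_contacts tower_pairs_subset_contacts[OF assms(2,3)]])
  finally show ?thesis .
qed

theorem proposition24:
  fixes n :: nat and r :: "nat \<Rightarrow> real"
  assumes "n \<ge> 7"
    and "\<And>i. i < n \<Longrightarrow> r i > 0"
  shows "\<exists>p :: nat \<Rightarrow> real^3. homothetic_cube_packing n r p \<and>
           card (contacts n r p) > 3 * n - 3"
proof -
  obtain \<sigma> where \<sigma>: "\<sigma> permutes {..<n}" and sorted: "mono_on {..<n} (r \<circ> \<sigma>)"
    using sorting_permutation by blast
  have nonneg: "0 \<le> (r \<circ> \<sigma>) k" if "k < n" for k
    using assms(2) permutes_in_image[OF \<sigma>] that by (simp add: less_imp_le)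
  define p where "p = tower_center (r \<circ> \<sigma>) \<circ> inv \<sigma>"
  have p_\<sigma>: "p \<circ> \<sigma> = tower_center (r \<circ> \<sigma>)"
    by (simp add: p_def comp_assoc permutes_inv_o[OF \<sigma>])
  have "homothetic_cube_packing n r p"
    using tower_packing[OF nonneg sorted] homothetic_cube_packing_permute[OF \<sigma>, of r p]
    unfolding p_\<sigma> by simp
  moreover have "3 * n \<le> card (contacts n r p)"
    using card_contacts_tower_ge[OF assms(1) nonneg sorted] card_contacts_permute[OF \<sigma>, of r p]
    unfolding p_\<sigma> by simp
  ultimately show ?thesis
    using assms(1) by (intro exI[of _ p]) auto
qed

end
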